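(* Let $S\le T_n$ be a transformation monoid and let $G\le S_n$ be a group normalizing $S$ (i.e. $g^{-1}Sg=S$ for all $g\in G$) such that $g^2=1$ for all $g\in G$. If $SG$ is intra-regular, then $S$ is intra-regular.
   Context: A transformation monoid is a subsemigroup of $T_n$ containing the identity map. $SG=\{sg:s\in S,g\in G\}$, a semigroup. A monoid $U$ is intra-regular if for every $a\in U$ there exist $b,c\in U$ with $ba^2c=a$. *)

theory Defs
  imports Main
begin

text \<open>Transformations of [n] = {0..<n} are represented as functions nat => nat
that map {0..<n} into itself and fix every i >= n (so they are canonical).
Transformations act on the right: the product s g means "first s, then g",
i.e. tmult s g = g o s.\<close>

definition T :: "nat \<Rightarrow> (nat \<Rightarrow> nat) set" where
  "T n = {f. (\<forall>i<n. f i < n) \<and> (\<forall>i\<ge>n. f i = i)}"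

definition Sym :: "nat \<Rightarrow> (nat \<Rightarrow> nat) set" where
  "Sym n = {f \<in> T n. bij f}"

definition tmult :: "(nat \<Rightarrow> nat) \<Rightarrow> (nat \<Rightarrow> nat) \<Rightarrow> (nat \<Rightarrow> nat)" where
  "tmult s g = g \<circ> s"

definition transformation_monoid :: "nat \<Rightarrow> (nat \<Rightarrow> nat) set \<Rightarrow> bool" where
  "transformation_monoid n S \<longleftrightarrow> S \<subseteq> T n \<and> id \<in> S \<and>
     (\<forall>x\<in>S. \<forall>y\<in>S. tmult x y \<in> S)"

definition perm_group :: "nat \<Rightarrow> (nat \<Rightarrow> nat) set \<Rightarrow> bool" where
  "perm_group n G \<longleftrightarrow> G \<subseteq> Sym n \<and> id \<in> G \<and>
     (\<forall>x\<in>G. \<forall>y\<in>G. tmult x y \<in> G) \<and> (\<forall>x\<in>G. inv x \<in> G)"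

definition normalizes :: "(nat \<Rightarrow> nat) set \<Rightarrow> (nat \<Rightarrow> nat) set \<Rightarrow> bool" where
  "normalizes G S \<longleftrightarrow> (\<forall>g\<in>G. {tmult (tmult (inv g) s) g | s. s \<in> S} = S)"

definition setprod :: "(nat \<Rightarrow> nat) set \<Rightarrow> (nat \<Rightarrow> nat) set \<Rightarrow> (nat \<Rightarrow> nat) set" where
  "setprod S G = {tmult s g | s g. s \<in> S \<and> g \<in> G}"

definition intra_regular :: "(nat \<Rightarrow> nat) set \<Rightarrow> bool" where
  "intra_regular U \<longleftrightarrow>
     (\<forall>a\<in>U. \<exists>b\<in>U. \<exists>c\<in>U. tmult (tmult (tmult b a) a) c = a)"

end

theory Submission
  imports Defs "HOL-Library.FuncSet"
begin

text \<open>If \<open>a = b a a c\<close> with \<open>b, c \<in> T\<^sub>n\<close>, then the image of \<open>a\<close> is contained in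
  the image of \<open>a\<^sup>2\<close>, so \<open>a\<close> permutes its own (finite) image. Some power \<open>a\<^sup>d\<close>, \<open>d \<ge> 1\<close>,
  is then the identity on that image, whence \<open>a\<^sup>d\<^sup>+\<^sup>1 = a\<close> and \<open>a = 1 \<cdot> a \<cdot> a \<cdot> a\<^sup>d\<^sup>-\<^sup>1\<close>
  with both witnesses in \<open>S\<close>. The hypotheses on \<open>G\<close> serve only to place \<open>SG\<close> inside \<open>T\<^sub>n\<close>.\<close>

lemma comp_in_T: "f \<in> T n \<Longrightarrow> g \<in> T n \<Longrightarrow> g \<circ> f \<in> T n"
  by (auto simp: T_def)

lemma funpow_in_T: "f \<in> T n \<Longrightarrow> f ^^ k \<in> T n"
  by (induction k) (auto simp: T_def)

lemma finite_T: "finite (T n)"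
proof -
  have "inj_on (\<lambda>f. restrict f {..<n}) (T n)"
  proof (rule inj_onI, rule ext)
    fix f g x assume "f \<in> T n" "g \<in> T n" "restrict f {..<n} = restrict g {..<n}"
    then show "f x = g x"
      by (cases "x < n") (auto simp: T_def dest: fun_cong[of _ _ x])
  qed
  moreover have "(\<lambda>f. restrict f {..<n}) ` T n \<subseteq> {..<n} \<rightarrow>\<^sub>E {..<n}"
    by (auto simp: T_def PiE_def extensional_def)
  moreover have "finite ({..<n} \<rightarrow>\<^sub>E {..<n :: nat})" by (simp add: finite_PiE)
  ultimately show ?thesis by (meson finite_imageD finite_subset)
qed

lemma funpow_in_transformation_monoid:
  assumes "transformation_monoid n S" "a \<in> S"
  shows "a ^^ k \<in> S"
proof (induction k)
  case 0
  then show ?case using assms(1) by (simp add: transformation_monoid_def id_def[symmetric])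
next
  case (Suc k)
  then have "tmult (a ^^ k) a \<in> S" using assms by (simp add: transformation_monoid_def)
  then show ?case by (simp add: tmult_def comp_def)
qed

lemma T_funpow_repeats:
  assumes "f \<in> T n"
  obtains i d where "d \<ge> 1" "f ^^ (i + d) = f ^^ i"
proof -
  have "range (\<lambda>k. f ^^ k) \<subseteq> T n" using funpow_in_T[OF assms] by auto
  then have "finite (range (\<lambda>k. f ^^ k))" using finite_T by (rule finite_subset)
  then have "\<not> inj (\<lambda>k. f ^^ k)" using finite_imageD by blast
  then obtain i j where "f ^^ i = f ^^ j" "i < j"
    by (metis linorder_inj_onI')
  then have "f ^^ (i + (j - i)) = f ^^ i" by simp
  then show thesis using that[of "j - i" i] \<open>i < j\<close> by simp
qed

lemma bij_betw_if_subset_image_image: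
  assumes "finite A" "f ` A \<subseteq> A" "A \<subseteq> g ` f ` A"
  shows "bij_betw f A A"
proof -
  have "card A \<le> card (f ` A)"
    using assms by (meson card_image_le card_mono finite_imageI le_trans)
  moreover have "card (f ` A) \<le> card A" using assms(1) by (rule card_image_le)
  ultimately show ?thesis
    using assms by (simp add: bij_betw_def eq_card_imp_inj_on card_subset_eq)
qed

lemma funpow_period_fixes:
  assumes "bij_betw f A A" "\<forall>x\<in>A. (f ^^ (i + d)) x = (f ^^ i) x" "y \<in> A"
  shows "(f ^^ d) y = y"
proof -
  have "inj_on (f ^^ i) A"
    using bij_betw_funpow[OF assms(1)] by (rule bij_betw_imp_inj_on)
  moreover have "(f ^^ d) y \<in> A"
    using bij_betw_funpow[OF assms(1)] assms(3) by (rule bij_betw_apply)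
  moreover have "(f ^^ i) ((f ^^ d) y) = (f ^^ i) y"
    using assms(2,3) by (simp add: funpow_add)
  ultimately show ?thesis using assms(3) by (simp add: inj_on_eq_iff)
qed

lemma T_funpow_Suc_Suc_eq_if_intra_regular:
  assumes aT: "a \<in> T n" and "b \<in> T n" "c \<in> T n" and a_eq: "a = c \<circ> a \<circ> a \<circ> b"
  obtains k where "a ^^ Suc (Suc k) = a"
proof -
  define A where "A = a ` {..<n}"
  have "A = c ` a ` a ` b ` {..<n}"
    unfolding A_def by (subst (1) a_eq) (simp add: image_comp)
  also have "\<dots> \<subseteq> c ` a ` A"
    using \<open>b \<in> T n\<close> by (auto simp: A_def T_def)
  finally have "A \<subseteq> c ` a ` A" .
  moreover have "a ` A \<subseteq> A" using aT by (auto simp: A_def T_def)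
  ultimately have bij: "bij_betw a A A"
    by (intro bij_betw_if_subset_image_image) (auto simp: A_def)
  obtain i d where "d \<ge> 1" "a ^^ (i + d) = a ^^ i" using T_funpow_repeats[OF aT] .
  then have fix_A: "(a ^^ d) y = y" if "y \<in> A" for y
    using funpow_period_fixes[OF bij, of i d y] that by simp
  have "a ^^ Suc d = a"
  proof
    fix x
    show "(a ^^ Suc d) x = a x"
    proof (cases "x < n")
      case True
      then show ?thesis using fix_A by (simp add: A_def funpow_Suc_right del: funpow.simps)
    next
      case False
      then show ?thesis using funpow_in_T[OF aT, of "Suc d"] aT by (simp add: T_def)
    qed
  qed
  moreover obtain k where "d = Suc k" using \<open>d \<ge> 1\<close> by (cases d) auto
  ultimately have "a ^^ Suc (Suc k) = a" by (simp only:)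
  then show thesis by (rule that)
qed

theorem proposition4p7:
  fixes n :: nat and S G :: "(nat \<Rightarrow> nat) set"
  assumes "transformation_monoid n S"
    and "perm_group n G"
    and "normalizes G S"
    and "\<forall>g\<in>G. tmult g g = id"
    and "intra_regular (setprod S G)"
  shows "intra_regular S"
  unfolding intra_regular_def
proof
  fix a assume aS: "a \<in> S"
  have ST: "S \<subseteq> T n" and idS: "id \<in> S" using assms(1) by (auto simp: transformation_monoid_def)
  have GT: "G \<subseteq> T n" and idG: "id \<in> G" using assms(2) by (auto simp: perm_group_def Sym_def)
  have SGT: "setprod S G \<subseteq> T n" using ST GT by (auto simp: setprod_def tmult_def intro!: comp_in_T)
  have "a = tmult a id" by (simp add: tmult_def)
  then have "a \<in> setprod S G" unfolding setprod_def using aS idG by blast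
  then obtain b c where "b \<in> setprod S G" "c \<in> setprod S G" "tmult (tmult (tmult b a) a) c = a"
    using assms(5) unfolding intra_regular_def by blast
  moreover have "a \<in> T n" using aS ST by blast
  moreover have "a = c \<circ> a \<circ> a \<circ> b"
    using calculation(3) by (simp add: tmult_def comp_assoc)
  ultimately obtain k where k: "a ^^ Suc (Suc k) = a"
    using SGT T_funpow_Suc_Suc_eq_if_intra_regular by blast
  have "tmult (tmult (tmult id a) a) (a ^^ k) = a"
    using k by (simp add: tmult_def comp_assoc funpow_Suc_right del: funpow.simps)
  then show "\<exists>b\<in>S. \<exists>c\<in>S. tmult (tmult (tmult b a) a) c = a"
    using idS funpow_in_transformation_monoid[OF assms(1) aS, of k] by blast
qed

end
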